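(* Let $n\ge2$ and let $c_0,c_1:S^1\to\mathbb R^n$ be smooth regular (immersed) closed curves. For every $\varepsilon>0$ there is a homotopy $C\in\mathbb C$ connecting $c_0$ to $c_1$ with $E^N(C)<\varepsilon$. Consequently the geodesic distance induced by the geometric $H^0$ metric $\langle h,k\rangle_c=\int\langle\pi_Nh,\pi_Nk\rangle\,ds$ vanishes identically.
   Context: $S^1=\mathbb R/2\pi\mathbb Z$, $I=S^1\times[0,1]$. The class $\mathbb C$ consists of all $C:I\to\mathbb R^n$ continuous on $I$, locally Lipschitz on $S^1\times(0,1)$, with $C(\cdot,0)=c_0$, $C(\cdot,1)=c_1$. $T=\partial_\theta C/|\partial_\theta C|$ ($T=0$ where $\partial_\theta C=0$), $\pi_Nw=w-\langle w,T\rangle T$, $E^N(C)=\int_I|\pi_N\partial_vC|^2|\partial_\theta C|\,d\theta\,dv$; $ds=|\dot c|d\theta$ is arclength. *)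

theory Defs
  imports "HOL-Analysis.Analysis"
begin

text \<open>S^1 = R / 2 pi Z is modelled by 2 pi-periodic functions on the reals.
  A closed curve is c :: real => real^'n with c (t + 2 pi) = c t.\<close>

definition periodic_curve :: "(real \<Rightarrow> 'a) \<Rightarrow> bool" where
  "periodic_curve c \<longleftrightarrow> (\<forall>t. c (t + 2 * pi) = c t)"

definition smooth_curve :: "(real \<Rightarrow> 'a::real_normed_vector) \<Rightarrow> bool" where
  "smooth_curve c \<longleftrightarrow> (\<exists>D :: nat \<Rightarrow> real \<Rightarrow> 'a. D 0 = c \<and>
      (\<forall>k t. (D k has_vector_derivative D (Suc k) t) (at t)))"

definition smooth_regular_closed_curve :: "(real \<Rightarrow> 'a::real_normed_vector) \<Rightarrow> bool" where
  "smooth_regular_closed_curve c \<longleftrightarrow> periodic_curve c \<and> smooth_curve c \<and>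
      (\<forall>t. vector_derivative c (at t) \<noteq> 0)"

definition locally_lipschitz_on :: "(real \<times> real) set \<Rightarrow> (real \<times> real \<Rightarrow> 'a::metric_space) \<Rightarrow> bool" where
  "locally_lipschitz_on S f \<longleftrightarrow> (\<forall>p\<in>S. \<exists>e>0. \<exists>L. \<forall>q\<in>ball p e \<inter> S. \<forall>r\<in>ball p e \<inter> S.
      dist (f q) (f r) \<le> L * dist q r)"

definition homotopy_class :: "(real \<Rightarrow> 'a::real_normed_vector) \<Rightarrow> (real \<Rightarrow> 'a) \<Rightarrow> (real \<Rightarrow> real \<Rightarrow> 'a) set" where
  "homotopy_class c0 c1 = {C. (\<forall>\<theta> v. C (\<theta> + 2 * pi) v = C \<theta> v) \<and>
      continuous_on (UNIV \<times> {0..1}) (\<lambda>(\<theta>, v). C \<theta> v) \<and>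
      locally_lipschitz_on (UNIV \<times> {0<..<1}) (\<lambda>(\<theta>, v). C \<theta> v) \<and>
      (\<forall>\<theta>. C \<theta> 0 = c0 \<theta>) \<and> (\<forall>\<theta>. C \<theta> 1 = c1 \<theta>)}"

text \<open>Partial derivatives (set to 0 where they do not exist, a null set for
  locally Lipschitz maps by Rademacher's theorem).\<close>
definition d_theta :: "(real \<Rightarrow> real \<Rightarrow> 'a::real_normed_vector) \<Rightarrow> real \<Rightarrow> real \<Rightarrow> 'a" where
  "d_theta C \<theta> v = (if (\<lambda>t. C t v) differentiable (at \<theta>)
      then vector_derivative (\<lambda>t. C t v) (at \<theta>) else 0)"

definition d_v :: "(real \<Rightarrow> real \<Rightarrow> 'a::real_normed_vector) \<Rightarrow> real \<Rightarrow> real \<Rightarrow> 'a" where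
  "d_v C \<theta> v = (if (\<lambda>s. C \<theta> s) differentiable (at v)
      then vector_derivative (\<lambda>s. C \<theta> s) (at v) else 0)"

definition unit_tangent :: "(real \<Rightarrow> real \<Rightarrow> 'a::real_inner) \<Rightarrow> real \<Rightarrow> real \<Rightarrow> 'a" where
  "unit_tangent C \<theta> v = (if d_theta C \<theta> v = 0 then 0
      else d_theta C \<theta> v /\<^sub>R norm (d_theta C \<theta> v))"

definition normal_proj :: "(real \<Rightarrow> real \<Rightarrow> 'a::real_inner) \<Rightarrow> real \<Rightarrow> real \<Rightarrow> 'a \<Rightarrow> 'a" where
  "normal_proj C \<theta> v w = w - (w \<bullet> unit_tangent C \<theta> v) *\<^sub>R unit_tangent C \<theta> v"

definition energy_N :: "(real \<Rightarrow> real \<Rightarrow> 'a::real_inner) \<Rightarrow> ennreal" where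
  "energy_N C = (\<integral>\<^sup>+ p. indicator ({0..2*pi} \<times> {0..1}) p *
      ennreal ((norm (normal_proj C (fst p) (snd p) (d_v C (fst p) (snd p))))\<^sup>2
               * norm (d_theta C (fst p) (snd p))) \<partial>lborel)"

end

theory Submission
  imports Defs
begin

(* Interpolate linearly between the curves, C = c0 + F (c1 - c0), with a profile
   F(theta, v) = smoothstep v + bump v * triangle_wave (N theta) that zigzags N times around
   the circle.  Then d_theta C contains the term +-N bump(v) (c1 - c0), which is parallel to
   d_v C = (d_v F) (c1 - c0).  Where N bump(v) is large the tangent is almost parallel to d_v C,
   so the normal part of d_v C has size O(1 / (N bump v)) against |d_theta C| = O(N bump v);
   where N bump(v) is small, d_v F = O(sqrt (bump v)) = O(1 / sqrt N).  Either way the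
   integrand of E^N is O(1/N). *)

lemma d_theta_eqI:
  assumes "((\<lambda>t. C t v) has_vector_derivative D) (at \<theta>)"
  shows "d_theta C \<theta> v = D"
  using assms by (auto simp: d_theta_def differentiableI_vector vector_derivative_at)

lemma d_v_eqI:
  assumes "(C \<theta> has_vector_derivative D) (at v)"
  shows "d_v C \<theta> v = D"
  using assms by (auto simp: d_v_def differentiableI_vector vector_derivative_at)

definition normal_component :: "'a::real_inner \<Rightarrow> 'a \<Rightarrow> 'a" where
  "normal_component \<tau> w = w - (w \<bullet> sgn \<tau>) *\<^sub>R sgn \<tau>"

lemma normal_proj_eq_normal_component:
  "normal_proj C \<theta> v w = normal_component (d_theta C \<theta> v) w"
  by (simp add: normal_proj_def unit_tangent_def normal_component_def sgn_div_norm)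

lemma normal_component_orthogonal: "normal_component \<tau> w \<bullet> sgn \<tau> = 0"
proof (cases "\<tau> = 0")
  case False
  then have "sgn \<tau> \<bullet> sgn \<tau> = 1"
    by (simp add: dot_square_norm norm_sgn)
  then show ?thesis by (simp add: normal_component_def inner_diff_left)
qed simp

lemma norm_normal_component_le: "norm (normal_component \<tau> w) \<le> norm w"
proof -
  have "orthogonal (normal_component \<tau> w) ((w \<bullet> sgn \<tau>) *\<^sub>R sgn \<tau>)"
    by (simp add: orthogonal_def normal_component_orthogonal)
  then have "(norm (normal_component \<tau> w + (w \<bullet> sgn \<tau>) *\<^sub>R sgn \<tau>))\<^sup>2
      = (norm (normal_component \<tau> w))\<^sup>2 + (norm ((w \<bullet> sgn \<tau>) *\<^sub>R sgn \<tau>))\<^sup>2"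
    by (rule norm_add_Pythagorean)
  then have "(norm (normal_component \<tau> w))\<^sup>2 \<le> (norm w)\<^sup>2"
    by (simp add: normal_component_def)
  then show ?thesis by (rule power2_le_imp_le) simp
qed

lemma normal_component_diff_scaleR:
  "normal_component \<tau> (w - c *\<^sub>R \<tau>) = normal_component \<tau> w"
proof -
  have tangential: "(\<tau> \<bullet> sgn \<tau>) *\<^sub>R sgn \<tau> = \<tau>"
  proof (cases "\<tau> = 0")
    case False
    then have "\<tau> \<bullet> sgn \<tau> = norm \<tau>"
      by (simp add: sgn_div_norm dot_square_norm power2_eq_square)
    then show ?thesis using False by (simp add: sgn_div_norm)
  qed simp
  have "((w - c *\<^sub>R \<tau>) \<bullet> sgn \<tau>) *\<^sub>R sgn \<tau> = (w \<bullet> sgn \<tau>) *\<^sub>R sgn \<tau> - c *\<^sub>R \<tau>"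
    by (simp add: inner_diff_left scaleR_diff_left tangential flip: scaleR_scaleR)
  then show ?thesis by (simp add: normal_component_def)
qed

lemma norm_normal_component_steep_le:
  assumes "p \<noteq> 0"
  shows "norm (normal_component (a + p *\<^sub>R d) (u *\<^sub>R d)) \<le> \<bar>u / p\<bar> * norm a"
proof -
  \<comment> \<open>\<open>u d\<close> differs from the tangential vector \<open>(u/p) (a + p d)\<close> only by \<open>(u/p) a\<close>.\<close>
  have "normal_component (a + p *\<^sub>R d) (u *\<^sub>R d)
      = normal_component (a + p *\<^sub>R d) (u *\<^sub>R d - (u / p) *\<^sub>R (a + p *\<^sub>R d))"
    by (rule normal_component_diff_scaleR[symmetric])
  also have "u *\<^sub>R d - (u / p) *\<^sub>R (a + p *\<^sub>R d) = - ((u / p) *\<^sub>R a)"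
    using assms by (simp add: algebra_simps)
  finally show ?thesis
    using norm_normal_component_le[of "a + p *\<^sub>R d" "- ((u / p) *\<^sub>R a)"] by simp
qed

lemma normal_component_steep_tangent_le:
  fixes a d :: "'a::real_inner"
  assumes a: "norm a \<le> M" and d: "norm d \<le> M"
  shows "(norm (normal_component (a + p *\<^sub>R d) (u *\<^sub>R d)))\<^sup>2 * norm (a + p *\<^sub>R d)
    \<le> 2 * u\<^sup>2 * M ^ 3 / max 1 \<bar>p\<bar>"
proof -
  define R where "R = norm (normal_component (a + p *\<^sub>R d) (u *\<^sub>R d))"
  have M: "0 \<le> M" using a norm_ge_zero order_trans by blast
  have "norm (a + p *\<^sub>R d) \<le> norm a + \<bar>p\<bar> * norm d"
    by (metis norm_scaleR norm_triangle_ineq)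
  also have "\<dots> \<le> M + \<bar>p\<bar> * M" using a d by (intro add_mono mult_left_mono) auto
  finally have tangent: "norm (a + p *\<^sub>R d) \<le> (1 + \<bar>p\<bar>) * M" by (simp add: algebra_simps)
  show ?thesis
  proof (cases "\<bar>p\<bar> \<le> 1")
    case True
    have "R \<le> \<bar>u\<bar> * M"
      using norm_normal_component_le[of "a + p *\<^sub>R d" "u *\<^sub>R d"] d
      by (simp add: R_def) (meson abs_ge_zero mult_left_mono order_trans)
    then have "R\<^sup>2 \<le> (\<bar>u\<bar> * M)\<^sup>2" by (simp add: R_def power_mono)
    moreover have "norm (a + p *\<^sub>R d) \<le> 2 * M"
      using tangent mult_right_mono[of "1 + \<bar>p\<bar>" 2 M] True M by linarith
    ultimately have "R\<^sup>2 * norm (a + p *\<^sub>R d) \<le> (\<bar>u\<bar> * M)\<^sup>2 * (2 * M)"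
      by (intro mult_mono) auto
    also have "\<dots> = 2 * u\<^sup>2 * M ^ 3 / max 1 \<bar>p\<bar>"
      using True by (simp add: power_mult_distrib power2_eq_square power3_eq_cube)
    finally show ?thesis by (simp add: R_def)
  next
    case False
    then have p: "p \<noteq> 0" "1 < \<bar>p\<bar>" by auto
    have "R \<le> \<bar>u / p\<bar> * M"
      using norm_normal_component_steep_le[OF p(1), of a d u] mult_left_mono[OF a, of "\<bar>u / p\<bar>"]
      unfolding R_def by linarith
    then have "R\<^sup>2 \<le> (\<bar>u / p\<bar> * M)\<^sup>2" by (simp add: R_def power_mono)
    moreover have "norm (a + p *\<^sub>R d) \<le> 2 * \<bar>p\<bar> * M"
      using tangent mult_right_mono[of "1 + \<bar>p\<bar>" "2 * \<bar>p\<bar>" M] p M by linarith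
    ultimately have "R\<^sup>2 * norm (a + p *\<^sub>R d) \<le> (\<bar>u / p\<bar> * M)\<^sup>2 * (2 * \<bar>p\<bar> * M)"
      by (intro mult_mono) auto
    also have "\<dots> = 2 * u\<^sup>2 * M ^ 3 / \<bar>p\<bar>"
      using p by (simp add: power2_eq_square power3_eq_cube field_simps)
    finally show ?thesis using p by (simp add: R_def)
  qed
qed

(* The distance from x to 2 pi Z. *)
definition triangle_wave :: "real \<Rightarrow> real" where
  "triangle_wave x = arccos (cos x)"

lemma triangle_wave_bounds: "0 \<le> triangle_wave x" "triangle_wave x \<le> pi"
  by (simp_all add: triangle_wave_def arccos_lbound arccos_ubound)

lemma triangle_wave_le: "triangle_wave x \<le> \<bar>x - of_int k * (2 * pi)\<bar>"
proof (cases "\<bar>x - of_int k * (2 * pi)\<bar> \<le> pi")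
  case True
  have "triangle_wave x = arccos (cos (x - of_int k * (2 * pi)))"
    using cos_int_2pin sin_int_2pin by (simp add: triangle_wave_def cos_diff mult.commute)
  also have "\<dots> = \<bar>x - of_int k * (2 * pi)\<bar>" using arccos_cos_eq_abs True by blast
  finally show ?thesis by simp
next
  case False
  then show ?thesis using triangle_wave_bounds(2)[of x] by simp
qed

lemma lipschitz_on_triangle_wave: "1-lipschitz_on UNIV triangle_wave"
proof -
  have *: "triangle_wave x \<le> triangle_wave y + \<bar>x - y\<bar>" for x y
  proof -
    obtain k where k: "triangle_wave y = \<bar>y - of_int k * (2 * pi)\<bar>"
      unfolding triangle_wave_def using arccos_cos_eq_abs_2pi by blast
    have "triangle_wave x \<le> \<bar>x - of_int k * (2 * pi)\<bar>" by (rule triangle_wave_le)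
    also have "\<dots> \<le> \<bar>y - of_int k * (2 * pi)\<bar> + \<bar>x - y\<bar>" by simp
    finally show ?thesis using k by simp
  qed
  show ?thesis
  proof (rule lipschitz_onI)
    fix x y :: real
    show "dist (triangle_wave x) (triangle_wave y) \<le> 1 * dist x y"
      using *[of x y] *[of y x] by (simp add: dist_real_def abs_minus_commute)
  qed simp
qed

lemma triangle_wave_add_2pi_multiple: "triangle_wave (x + 2 * real n * pi) = triangle_wave x"
  by (simp add: triangle_wave_def cos_add)

lemma triangle_wave_has_real_derivative:
  assumes "sin x \<noteq> 0"
  shows "(triangle_wave has_real_derivative sgn (sin x)) (at x)"
proof -
  have sin_sq: "1 - (cos x)\<^sup>2 = (sin x)\<^sup>2" using sin_cos_squared_add[of x] by linarith
  moreover have "0 < (sin x)\<^sup>2" using assms by simp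
  ultimately have "(cos x)\<^sup>2 < 1" by linarith
  then have "\<bar>cos x\<bar> < 1" by (simp add: abs_square_less_1)
  then have "-1 < cos x" "cos x < 1" by linarith+
  then have "(triangle_wave has_real_derivative inverse (- sqrt (1 - (cos x)\<^sup>2)) * (- sin x)) (at x)"
    unfolding triangle_wave_def[abs_def]
    by (rule DERIV_chain2[where f = arccos, OF DERIV_arccos DERIV_cos])
  moreover have "inverse (- sqrt (1 - (cos x)\<^sup>2)) * (- sin x) = sgn (sin x)"
    using assms unfolding sin_sq real_sqrt_abs by (cases "sin x > 0") (auto simp: sgn_if)
  ultimately show ?thesis by simp
qed

lemma lipschitz_on_scaleR:
  fixes f :: "'a::metric_space \<Rightarrow> real" and g :: "'a \<Rightarrow> 'b::real_normed_vector"
  assumes f: "Lf-lipschitz_on U f" and g: "Lg-lipschitz_on U g"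
    and f_bound: "\<And>x. x \<in> U \<Longrightarrow> \<bar>f x\<bar> \<le> Bf" and g_bound: "\<And>x. x \<in> U \<Longrightarrow> norm (g x) \<le> Bg"
    and "0 \<le> Bf" "0 \<le> Bg"
  shows "(Bf * Lg + Bg * Lf)-lipschitz_on U (\<lambda>x. f x *\<^sub>R g x)"
proof (rule lipschitz_onI)
  fix x y assume xy: "x \<in> U" "y \<in> U"
  have "f x *\<^sub>R g x - f y *\<^sub>R g y = f x *\<^sub>R (g x - g y) + (f x - f y) *\<^sub>R g y"
    by (simp add: algebra_simps)
  then have "dist (f x *\<^sub>R g x) (f y *\<^sub>R g y) \<le> \<bar>f x\<bar> * dist (g x) (g y) + dist (f x) (f y) * norm (g y)"
    by (metis dist_norm dist_real_def norm_scaleR norm_triangle_ineq)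
  also have "\<dots> \<le> Bf * (Lg * dist x y) + (Lf * dist x y) * Bg"
    using lipschitz_onD[OF g xy] lipschitz_onD[OF f xy] f_bound g_bound xy \<open>0 \<le> Bf\<close> lipschitz_on_nonneg[OF f]
    by (intro add_mono mult_mono) auto
  finally show "dist (f x *\<^sub>R g x) (f y *\<^sub>R g y) \<le> (Bf * Lg + Bg * Lf) * dist x y"
    by (simp add: algebra_simps)
next
  show "0 \<le> Bf * Lg + Bg * Lf"
    using lipschitz_on_nonneg[OF f] lipschitz_on_nonneg[OF g] assms by simp
qed

lemma lipschitz_on_fst_comp:
  assumes "L-lipschitz_on A f"
  shows "L-lipschitz_on (A \<times> B) (\<lambda>p. f (fst p))"
proof (rule lipschitz_onI)
  fix p q assume "p \<in> A \<times> B" "q \<in> A \<times> B"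
  then have "dist (f (fst p)) (f (fst q)) \<le> L * dist (fst p) (fst q)"
    by (auto intro: lipschitz_onD[OF assms])
  also have "\<dots> \<le> L * dist p q"
    using dist_fst_le lipschitz_on_nonneg[OF assms] by (rule mult_left_mono)
  finally show "dist (f (fst p)) (f (fst q)) \<le> L * dist p q" .
qed (rule lipschitz_on_nonneg[OF assms])

lemma lipschitz_on_snd_comp:
  assumes "L-lipschitz_on B f"
  shows "L-lipschitz_on (A \<times> B) (\<lambda>p. f (snd p))"
proof (rule lipschitz_onI)
  fix p q assume "p \<in> A \<times> B" "q \<in> A \<times> B"
  then have "dist (f (snd p)) (f (snd q)) \<le> L * dist (snd p) (snd q)"
    by (auto intro: lipschitz_onD[OF assms])
  also have "\<dots> \<le> L * dist p q"
    using dist_snd_le lipschitz_on_nonneg[OF assms] by (rule mult_left_mono)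
  finally show "dist (f (snd p)) (f (snd q)) \<le> L * dist p q" .
qed (rule lipschitz_on_nonneg[OF assms])

lemma locally_lipschitz_on_UNIV_times:
  fixes f :: "real \<times> real \<Rightarrow> 'a::metric_space"
  assumes lip: "\<And>a b. \<exists>L. L-lipschitz_on ({a..b} \<times> B) f" and "C \<subseteq> B"
  shows "locally_lipschitz_on (UNIV \<times> C) f"
  unfolding locally_lipschitz_on_def
proof
  fix p :: "real \<times> real"
  obtain L where L: "L-lipschitz_on ({fst p - 1..fst p + 1} \<times> B) f" using lip by blast
  have "ball p 1 \<inter> UNIV \<times> C \<subseteq> {fst p - 1..fst p + 1} \<times> B"
  proof
    fix q assume q: "q \<in> ball p 1 \<inter> UNIV \<times> C"
    then have "\<bar>fst p - fst q\<bar> < 1" using dist_fst_le[of p q] by (simp add: dist_real_def)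
    with q \<open>C \<subseteq> B\<close> show "q \<in> {fst p - 1..fst p + 1} \<times> B" by (auto simp: mem_Times_iff)
  qed
  with L have "\<forall>q\<in>ball p 1 \<inter> UNIV \<times> C. \<forall>r\<in>ball p 1 \<inter> UNIV \<times> C. dist (f q) (f r) \<le> L * dist q r"
    by (auto intro: lipschitz_onD)
  then show "\<exists>e>0. \<exists>L. \<forall>q\<in>ball p e \<inter> UNIV \<times> C. \<forall>r\<in>ball p e \<inter> UNIV \<times> C. dist (f q) (f r) \<le> L * dist q r"
    by (intro exI[of _ 1]) auto
qed

lemma lipschitz_on_Icc_derivative_bound:
  fixes f :: "real \<Rightarrow> 'a::real_normed_vector"
  assumes "\<And>x. x \<in> {a..b} \<Longrightarrow> (f has_vector_derivative f' x) (at x)"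
    and "\<And>x. x \<in> {a..b} \<Longrightarrow> norm (f' x) \<le> B" and "0 \<le> B"
  shows "B-lipschitz_on {a..b} f"
proof (rule bounded_derivative_imp_lipschitz[where f' = "\<lambda>x h. h *\<^sub>R f' x"])
  fix x assume x: "x \<in> {a..b}"
  show "(f has_derivative (\<lambda>h. h *\<^sub>R f' x)) (at x within {a..b})"
    using assms(1)[OF x] unfolding has_vector_derivative_def by (rule has_derivative_at_withinI)
  have "onorm (\<lambda>h. h *\<^sub>R f' x) = norm (f' x)"
    using onorm_scaleR_left[OF bounded_linear_ident] onorm_id[where 'a = real] by simp
  then show "onorm (\<lambda>h. h *\<^sub>R f' x) \<le> B" using assms(2)[OF x] by simp
qed (use assms in auto)

lemma C1_lipschitz_on_Icc:
  fixes f :: "real \<Rightarrow> 'a::real_normed_vector"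
  assumes "\<And>t. (f has_vector_derivative f' t) (at t)" and "continuous_on {a..b} f'"
  obtains L where "L-lipschitz_on {a..b} f"
proof -
  obtain B where "0 \<le> B" "\<And>t. t \<in> {a..b} \<Longrightarrow> norm (f' t) \<le> B"
    using continuous_on_compact_bound[OF compact_Icc assms(2)] by blast
  then show ?thesis using assms(1) lipschitz_on_Icc_derivative_bound that by blast
qed

lemma has_vector_derivative_imp_continuous_on:
  assumes "\<And>t. (f has_vector_derivative f' t) (at t)"
  shows "continuous_on UNIV f"
  by (rule continuous_at_imp_continuous_on) (use assms has_vector_derivative_continuous in blast)

lemma smooth_regular_closed_curve_C1:
  fixes c :: "real \<Rightarrow> 'a::real_normed_vector"
  assumes "smooth_regular_closed_curve c"
  obtains c' where "periodic_curve c" "\<And>t. (c has_vector_derivative c' t) (at t)" "continuous_on UNIV c'"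
proof -
  from assms obtain D :: "nat \<Rightarrow> real \<Rightarrow> 'a" where per: "periodic_curve c" and "D 0 = c"
    and D: "\<And>k t. (D k has_vector_derivative D (Suc k) t) (at t)"
    unfolding smooth_regular_closed_curve_def smooth_curve_def by blast
  then have "(c has_vector_derivative D 1 t) (at t)" for t using D[of 0] by simp
  moreover have "continuous_on UNIV (D 1)" by (rule has_vector_derivative_imp_continuous_on[OF D])
  ultimately show ?thesis using per that by blast
qed

definition smoothstep :: "real \<Rightarrow> real" where
  "smoothstep v = 3 * v\<^sup>2 - 2 * v ^ 3"

definition bump :: "real \<Rightarrow> real" where
  "bump v = (v * (1 - v))\<^sup>2"

lemma unit_interval_parabola_bounds:
  "0 \<le> (v::real) \<Longrightarrow> v \<le> 1 \<Longrightarrow> 0 \<le> v * (1 - v) \<and> v * (1 - v) \<le> 1"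
  using mult_le_one[of v "1 - v"] by simp

lemma smoothstep_bounds: "0 \<le> v \<Longrightarrow> v \<le> 1 \<Longrightarrow> 0 \<le> smoothstep v \<and> smoothstep v \<le> 1"
proof -
  assume v: "0 \<le> v" "v \<le> 1"
  have "smoothstep v = v\<^sup>2 * (3 - 2 * v)" "1 - smoothstep v = (1 - v)\<^sup>2 * (1 + 2 * v)"
    by (simp_all add: smoothstep_def power2_eq_square power3_eq_cube algebra_simps)
  moreover have "0 \<le> v\<^sup>2 * (3 - 2 * v)" "0 \<le> (1 - v)\<^sup>2 * (1 + 2 * v)"
    using v by simp_all
  ultimately show ?thesis by linarith
qed

lemma bump_bounds: "0 \<le> v \<Longrightarrow> v \<le> 1 \<Longrightarrow> 0 \<le> bump v \<and> bump v \<le> 1"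
  using unit_interval_parabola_bounds[of v] by (simp add: bump_def power_le_one)

lemma smoothstep_has_real_derivative: "(smoothstep has_real_derivative 6 * (v * (1 - v))) (at v)"
  unfolding smoothstep_def[abs_def]
  by (auto intro!: derivative_eq_intros simp: power2_eq_square algebra_simps)

lemma bump_has_real_derivative: "(bump has_real_derivative 2 * (v * (1 - v)) * (1 - 2 * v)) (at v)"
  unfolding bump_def[abs_def]
  by (auto intro!: derivative_eq_intros simp: power2_eq_square algebra_simps)

lemma lipschitz_on_smoothstep: "6-lipschitz_on {0..1} smoothstep"
  by (rule lipschitz_on_Icc_derivative_bound[where f' = "\<lambda>v. 6 * (v * (1 - v))"])
    (use unit_interval_parabola_bounds smoothstep_has_real_derivative in
      \<open>auto simp: has_real_derivative_iff_has_vector_derivative\<close>)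

lemma lipschitz_on_bump: "2-lipschitz_on {0..1} bump"
proof (rule lipschitz_on_Icc_derivative_bound[where f' = "\<lambda>v. 2 * (v * (1 - v)) * (1 - 2 * v)"])
  fix v :: real assume v: "v \<in> {0..1}"
  then have "\<bar>v * (1 - v)\<bar> * \<bar>1 - 2 * v\<bar> \<le> 1 * 1"
    using unit_interval_parabola_bounds[of v] by (intro mult_mono) auto
  then show "norm (2 * (v * (1 - v)) * (1 - 2 * v)) \<le> 2" by (simp add: abs_mult)
qed (use bump_has_real_derivative in \<open>auto simp: has_real_derivative_iff_has_vector_derivative\<close>)

definition zigzag_profile :: "real \<Rightarrow> real \<Rightarrow> real \<Rightarrow> real" where
  "zigzag_profile N \<theta> v = smoothstep v + bump v * triangle_wave (N * \<theta>)"

definition zigzag_homotopy ::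
    "(real \<Rightarrow> 'a::real_normed_vector) \<Rightarrow> (real \<Rightarrow> 'a) \<Rightarrow> real \<Rightarrow> real \<Rightarrow> real \<Rightarrow> 'a" where
  "zigzag_homotopy c0 c1 N \<theta> v = c0 \<theta> + zigzag_profile N \<theta> v *\<^sub>R (c1 \<theta> - c0 \<theta>)"

lemma zigzag_profile_bounds: "0 \<le> v \<Longrightarrow> v \<le> 1 \<Longrightarrow> \<bar>zigzag_profile N \<theta> v\<bar> \<le> 1 + pi"
proof -
  assume v: "0 \<le> v" "v \<le> 1"
  have "0 \<le> bump v * triangle_wave (N * \<theta>)" "bump v * triangle_wave (N * \<theta>) \<le> 1 * pi"
    using bump_bounds[OF v] triangle_wave_bounds[of "N * \<theta>"]
      mult_mono[of "bump v" 1 "triangle_wave (N * \<theta>)" pi] by auto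
  then show ?thesis using smoothstep_bounds[OF v] by (simp add: zigzag_profile_def)
qed

lemma lipschitz_on_zigzag_profile:
  assumes "0 \<le> N"
  shows "(6 + N + 2 * pi)-lipschitz_on (UNIV \<times> {0..1}) (\<lambda>p. zigzag_profile N (fst p) (snd p))"
proof -
  let ?S = "UNIV \<times> {0..1::real}"
  have "N-lipschitz_on UNIV (\<lambda>\<theta>. triangle_wave (N * \<theta>))"
  proof (rule lipschitz_onI)
    fix x y :: real
    show "dist (triangle_wave (N * x)) (triangle_wave (N * y)) \<le> N * dist x y"
      using lipschitz_onD[OF lipschitz_on_triangle_wave, of "N * x" "N * y"] assms
      by (simp add: dist_real_def abs_mult flip: right_diff_distrib)
  qed (rule assms)
  then have tri: "N-lipschitz_on ?S (\<lambda>p. triangle_wave (N * fst p))"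
    by (rule lipschitz_on_fst_comp)
  have "(1 * N + pi * 2)-lipschitz_on ?S (\<lambda>p. bump (snd p) *\<^sub>R triangle_wave (N * fst p))"
    by (rule lipschitz_on_scaleR[OF lipschitz_on_snd_comp[OF lipschitz_on_bump] tri])
      (use bump_bounds triangle_wave_bounds in auto)
  then have "(6 + (1 * N + pi * 2))-lipschitz_on ?S
      (\<lambda>p. smoothstep (snd p) + bump (snd p) *\<^sub>R triangle_wave (N * fst p))"
    by (rule lipschitz_on_add[OF lipschitz_on_snd_comp[OF lipschitz_on_smoothstep]])
  then show ?thesis by (simp add: zigzag_profile_def algebra_simps)
qed

lemma zigzag_profile_has_real_derivative_v:
  "((\<lambda>v. zigzag_profile N \<theta> v) has_real_derivative
     v * (1 - v) * (6 + 2 * (1 - 2 * v) * triangle_wave (N * \<theta>))) (at v)"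
  unfolding zigzag_profile_def
  by (auto intro!: derivative_eq_intros smoothstep_has_real_derivative bump_has_real_derivative
      simp: algebra_simps)

lemma zigzag_profile_v_derivative_sq_le:
  assumes v: "0 \<le> v" "v \<le> 1"
  shows "(v * (1 - v) * (6 + 2 * (1 - 2 * v) * triangle_wave x))\<^sup>2 \<le> 196 * bump v"
proof -
  have "\<bar>2 * (1 - 2 * v) * triangle_wave x\<bar> \<le> 2 * 1 * 4"
    unfolding abs_mult using v triangle_wave_bounds[of x] pi_less_4 by (intro mult_mono) auto
  then have "\<bar>6 + 2 * (1 - 2 * v) * triangle_wave x\<bar> \<le> 14"
    unfolding abs_le_iff by linarith
  then have "\<bar>v * (1 - v) * (6 + 2 * (1 - 2 * v) * triangle_wave x)\<bar> \<le> v * (1 - v) * 14"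
    using v unit_interval_parabola_bounds[OF v] by (simp add: abs_mult mult_left_mono)
  from power_mono[OF this abs_ge_zero, of 2]
  have "(v * (1 - v) * (6 + 2 * (1 - 2 * v) * triangle_wave x))\<^sup>2 \<le> (v * (1 - v) * 14)\<^sup>2"
    by simp
  also have "\<dots> = 196 * bump v" by (simp add: bump_def power_mult_distrib)
  finally show ?thesis .
qed

lemma zigzag_profile_has_real_derivative_theta:
  assumes "sin (N * \<theta>) \<noteq> 0"
  shows "((\<lambda>\<theta>. zigzag_profile N \<theta> v) has_real_derivative N * sgn (sin (N * \<theta>)) * bump v) (at \<theta>)"
proof -
  have "((\<lambda>t. triangle_wave (N * t)) has_real_derivative sgn (sin (N * \<theta>)) * N) (at \<theta>)"
    by (rule DERIV_chain2[where g = "\<lambda>t. N * t", OF triangle_wave_has_real_derivative[OF assms]])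
      (auto intro!: derivative_eq_intros)
  then show ?thesis
    unfolding zigzag_profile_def by (auto intro!: derivative_eq_intros simp: algebra_simps)
qed

lemma zigzag_profile_periodic:
  "zigzag_profile (real n) (\<theta> + 2 * pi) v = zigzag_profile (real n) \<theta> v"
proof -
  have "real n * (\<theta> + 2 * pi) = real n * \<theta> + 2 * real n * pi" by (simp add: algebra_simps)
  then show ?thesis by (simp add: zigzag_profile_def triangle_wave_add_2pi_multiple)
qed

lemma d_v_zigzag_homotopy:
  "d_v (zigzag_homotopy c0 c1 N) \<theta> v
     = (v * (1 - v) * (6 + 2 * (1 - 2 * v) * triangle_wave (N * \<theta>))) *\<^sub>R (c1 \<theta> - c0 \<theta>)"
  unfolding zigzag_homotopy_def
  by (rule d_v_eqI)
    (auto intro!: derivative_eq_intros zigzag_profile_has_real_derivative_v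
      simp: has_real_derivative_iff_has_vector_derivative)

lemma d_theta_zigzag_homotopy:
  assumes "(c0 has_vector_derivative c0') (at \<theta>)" and "(c1 has_vector_derivative c1') (at \<theta>)"
    and "sin (N * \<theta>) \<noteq> 0"
  shows "d_theta (zigzag_homotopy c0 c1 N) \<theta> v
     = (c0' + zigzag_profile N \<theta> v *\<^sub>R (c1' - c0')) + (N * sgn (sin (N * \<theta>)) * bump v) *\<^sub>R (c1 \<theta> - c0 \<theta>)"
  unfolding zigzag_homotopy_def add.assoc
  by (rule d_theta_eqI) (intro has_vector_derivative_add has_vector_derivative_scaleR
      has_vector_derivative_diff assms zigzag_profile_has_real_derivative_theta)

lemma lipschitz_on_zigzag_homotopy:
  fixes c0 c1 :: "real \<Rightarrow> 'a::real_normed_vector"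
  assumes d0: "\<And>t. (c0 has_vector_derivative c0' t) (at t)"
    and d1: "\<And>t. (c1 has_vector_derivative c1' t) (at t)"
    and "continuous_on UNIV c0'" "continuous_on UNIV c1'" and "0 \<le> N"
  shows "\<exists>L. L-lipschitz_on ({a..b} \<times> {0..1}) (\<lambda>(\<theta>, v). zigzag_homotopy c0 c1 N \<theta> v)"
proof -
  let ?S = "{a..b} \<times> {0..1::real}"
  have dd: "((\<lambda>t. c1 t - c0 t) has_vector_derivative c1' t - c0' t) (at t)" for t
    using d1 d0 by (rule has_vector_derivative_diff)
  obtain L0 where L0: "L0-lipschitz_on {a..b} c0"
    using C1_lipschitz_on_Icc[OF d0 continuous_on_subset[OF assms(3) subset_UNIV]] by blast
  obtain Ld where Ld: "Ld-lipschitz_on {a..b} (\<lambda>t. c1 t - c0 t)"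
    using C1_lipschitz_on_Icc[OF dd continuous_on_subset[OF continuous_on_diff[OF assms(4,3)] subset_UNIV]]
    by blast
  obtain B where B: "0 \<le> B" "\<And>t. t \<in> {a..b} \<Longrightarrow> norm (c1 t - c0 t) \<le> B"
    using continuous_on_compact_bound[OF compact_Icc lipschitz_on_continuous_on[OF Ld]] by blast
  have "((1 + pi) * Ld + B * (6 + N + 2 * pi))-lipschitz_on ?S
      (\<lambda>p. zigzag_profile N (fst p) (snd p) *\<^sub>R (c1 (fst p) - c0 (fst p)))"
    by (rule lipschitz_on_scaleR[OF lipschitz_on_subset[OF lipschitz_on_zigzag_profile[OF assms(5)]]
          lipschitz_on_fst_comp[OF Ld]])
      (use zigzag_profile_bounds B in auto)
  from lipschitz_on_add[OF lipschitz_on_fst_comp[OF L0] this]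
  show ?thesis by (auto simp: zigzag_homotopy_def case_prod_beta)
qed

lemma zigzag_homotopy_in_homotopy_class:
  fixes c0 c1 :: "real \<Rightarrow> 'a::real_normed_vector"
  assumes "periodic_curve c0" "periodic_curve c1"
    and d0: "\<And>t. (c0 has_vector_derivative c0' t) (at t)"
    and d1: "\<And>t. (c1 has_vector_derivative c1' t) (at t)"
    and "continuous_on UNIV c0'" "continuous_on UNIV c1'"
  shows "zigzag_homotopy c0 c1 (real n) \<in> homotopy_class c0 c1"
  unfolding homotopy_class_def
proof (intro CollectI conjI allI)
  fix \<theta> v
  show "zigzag_homotopy c0 c1 (real n) (\<theta> + 2 * pi) v = zigzag_homotopy c0 c1 (real n) \<theta> v"
    using assms(1,2) by (simp add: zigzag_homotopy_def zigzag_profile_periodic periodic_curve_def)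
next
  have "continuous_on (UNIV \<times> {0..1}) (\<lambda>p. zigzag_profile (real n) (fst p) (snd p))"
    by (rule lipschitz_on_continuous_on[OF lipschitz_on_zigzag_profile]) simp
  moreover have "continuous_on (UNIV \<times> {0..1}) (\<lambda>p. c0 (fst p))" "continuous_on (UNIV \<times> {0..1}) (\<lambda>p. c1 (fst p))"
    by (auto intro!: continuous_on_compose2[OF has_vector_derivative_imp_continuous_on] continuous_intros d0 d1)
  ultimately show "continuous_on (UNIV \<times> {0..1}) (\<lambda>(\<theta>, v). zigzag_homotopy c0 c1 (real n) \<theta> v)"
    by (auto simp: zigzag_homotopy_def case_prod_beta intro!: continuous_intros)
next
  show "locally_lipschitz_on (UNIV \<times> {0<..<1}) (\<lambda>(\<theta>, v). zigzag_homotopy c0 c1 (real n) \<theta> v)"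
    by (rule locally_lipschitz_on_UNIV_times[OF lipschitz_on_zigzag_homotopy[OF d0 d1 assms(5,6)]]) auto
next
  fix \<theta>
  show "zigzag_homotopy c0 c1 (real n) \<theta> 0 = c0 \<theta>" "zigzag_homotopy c0 c1 (real n) \<theta> 1 = c1 \<theta>"
    by (simp_all add: zigzag_homotopy_def zigzag_profile_def smoothstep_def bump_def)
qed

definition energy_density :: "(real \<Rightarrow> real \<Rightarrow> 'a::real_inner) \<Rightarrow> real \<Rightarrow> real \<Rightarrow> real" where
  "energy_density C \<theta> v = (norm (normal_proj C \<theta> v (d_v C \<theta> v)))\<^sup>2 * norm (d_theta C \<theta> v)"

lemma energy_N_le:
  fixes C :: "real \<Rightarrow> real \<Rightarrow> 'a::real_inner"
  assumes "countable Z" and "0 \<le> K"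
    and bound: "\<And>\<theta> v. \<theta> \<in> {0..2 * pi} \<Longrightarrow> v \<in> {0..1} \<Longrightarrow> \<theta> \<notin> Z \<Longrightarrow> energy_density C \<theta> v \<le> K"
  shows "energy_N C \<le> ennreal (2 * pi * K)"
proof -
  let ?box = "{0..2 * pi} \<times> {0..1::real}"
  have "Z \<times> UNIV \<in> null_sets (lborel \<Otimes>\<^sub>M lborel)"
    using countable_imp_null_set_lborel[OF assms(1)] by (intro lborel.times_in_null_sets1) auto
  then have null: "Z \<times> UNIV \<in> null_sets lborel" by (simp only: lborel_prod)
  have "AE p in lborel. indicator ?box p * ennreal (energy_density C (fst p) (snd p)) \<le> ennreal K * indicator ?box p"
    by (rule AE_I'[OF null]) (auto simp: indicator_def intro!: ennreal_leI bound)
  then have "energy_N C \<le> (\<integral>\<^sup>+ p. ennreal K * indicator ?box p \<partial>lborel)"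
    unfolding energy_N_def energy_density_def by (rule nn_integral_mono_AE)
  also have "\<dots> = ennreal K * emeasure lborel ?box"
    by (rule nn_integral_cmult_indicator) (simp add: borel_closed closed_Times)
  also have "emeasure lborel ?box = ennreal (2 * pi)"
  proof -
    have "emeasure (lborel \<Otimes>\<^sub>M lborel) ?box = emeasure lborel {0..2 * pi} * emeasure lborel {0..1::real}"
      by (intro lborel.emeasure_pair_measure_Times) auto
    then show ?thesis by (simp add: lborel_prod)
  qed
  finally show ?thesis using \<open>0 \<le> K\<close> by (simp add: ennreal_mult' mult.commute)
qed

lemma countable_sin_mult_zeros:
  fixes N :: real
  assumes "N \<noteq> 0"
  shows "countable {\<theta>. sin (N * \<theta>) = 0}"
proof -
  have "{\<theta>. sin (N * \<theta>) = 0} \<subseteq> range (\<lambda>i::int. of_int i * pi / N)"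
  proof
    fix \<theta> assume "\<theta> \<in> {\<theta>. sin (N * \<theta>) = 0}"
    then obtain i :: int where "N * \<theta> = of_int i * pi" using sin_zero_iff_int2 by auto
    then have "\<theta> = of_int i * pi / N" using assms by (simp add: field_simps)
    then show "\<theta> \<in> range (\<lambda>i::int. of_int i * pi / N)" by blast
  qed
  then show ?thesis by (rule countable_subset) simp
qed

lemma div_max_one_mult_le:
  fixes N b :: real
  assumes "0 < N" "0 \<le> b"
  shows "b / max 1 (N * b) \<le> 1 / N"
proof (cases "N * b \<le> 1")
  case True
  then show ?thesis using assms by (simp add: pos_le_divide_eq mult.commute)
next
  case False
  then have "b \<noteq> 0" by auto
  then show ?thesis using False by simp
qed

lemma energy_density_zigzag_homotopy_le:
  fixes c0 c1 :: "real \<Rightarrow> 'a::real_inner"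
  assumes "(c0 has_vector_derivative c0') (at \<theta>)" "(c1 has_vector_derivative c1') (at \<theta>)"
    and "sin (N * \<theta>) \<noteq> 0" and "0 < N" and v: "0 \<le> v" "v \<le> 1"
    and M: "norm c0' + (1 + pi) * norm (c1' - c0') + norm (c1 \<theta> - c0 \<theta>) \<le> M"
  shows "energy_density (zigzag_homotopy c0 c1 N) \<theta> v \<le> 392 * M ^ 3 / N"
proof -
  define a where "a = c0' + zigzag_profile N \<theta> v *\<^sub>R (c1' - c0')"
  define p where "p = N * sgn (sin (N * \<theta>)) * bump v"
  define u where "u = v * (1 - v) * (6 + 2 * (1 - 2 * v) * triangle_wave (N * \<theta>))"
  have "0 \<le> (1 + pi) * norm (c1' - c0')" by simp
  then have M1: "norm c0' + (1 + pi) * norm (c1' - c0') \<le> M" and M2: "norm (c1 \<theta> - c0 \<theta>) \<le> M"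
    using M norm_ge_zero[of c0'] norm_ge_zero[of "c1 \<theta> - c0 \<theta>"] by linarith+
  have M0: "0 \<le> M" using M2 norm_ge_zero order_trans by blast
  have b: "0 \<le> bump v" using bump_bounds[OF v] by simp
  have "norm a \<le> norm c0' + \<bar>zigzag_profile N \<theta> v\<bar> * norm (c1' - c0')"
    unfolding a_def by (metis norm_scaleR norm_triangle_ineq)
  also have "\<dots> \<le> M"
    using M1 mult_right_mono[OF zigzag_profile_bounds[OF v, of N \<theta>] norm_ge_zero[of "c1' - c0'"]] by linarith
  finally have a: "norm a \<le> M" .
  have u: "u\<^sup>2 \<le> 196 * bump v"
    unfolding u_def by (rule zigzag_profile_v_derivative_sq_le[OF v])
  have p: "\<bar>p\<bar> = N * bump v" using assms(3,4) b by (simp add: p_def abs_mult)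
  have "energy_density (zigzag_homotopy c0 c1 N) \<theta> v
      = (norm (normal_component (a + p *\<^sub>R (c1 \<theta> - c0 \<theta>)) (u *\<^sub>R (c1 \<theta> - c0 \<theta>))))\<^sup>2
        * norm (a + p *\<^sub>R (c1 \<theta> - c0 \<theta>))"
    by (simp add: energy_density_def normal_proj_eq_normal_component d_v_zigzag_homotopy
        d_theta_zigzag_homotopy[OF assms(1-3)] a_def p_def u_def)
  also have "\<dots> \<le> 2 * u\<^sup>2 * M ^ 3 / max 1 \<bar>p\<bar>"
    by (rule normal_component_steep_tangent_le[OF a M2])
  also have "\<dots> \<le> 2 * (196 * bump v) * M ^ 3 / max 1 (N * bump v)"
    unfolding p using u M0 by (intro divide_right_mono mult_right_mono mult_left_mono) auto
  also have "\<dots> = 392 * M ^ 3 * (bump v / max 1 (N * bump v))"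
    by simp
  also have "\<dots> \<le> 392 * M ^ 3 * (1 / N)"
    using div_max_one_mult_le[OF \<open>0 < N\<close> b] M0 by (intro mult_left_mono) auto
  finally show ?thesis by simp
qed

lemma zigzag_homotopy_energy_le:
  fixes c0 c1 :: "real \<Rightarrow> 'a::real_inner"
  assumes d0: "\<And>t. (c0 has_vector_derivative c0' t) (at t)"
    and d1: "\<And>t. (c1 has_vector_derivative c1' t) (at t)"
    and "continuous_on UNIV c0'" "continuous_on UNIV c1'"
  obtains K where "\<And>N. 0 < N \<Longrightarrow> energy_N (zigzag_homotopy c0 c1 N) \<le> ennreal (K / N)"
proof -
  have "continuous_on {0..2 * pi}
      (\<lambda>t. norm (c0' t) + (1 + pi) * norm (c1' t - c0' t) + norm (c1 t - c0 t))"
    using assms(3,4) has_vector_derivative_imp_continuous_on[OF d0] has_vector_derivative_imp_continuous_on[OF d1]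
    by (auto intro!: continuous_intros elim: continuous_on_subset)
  then obtain M where M: "0 \<le> M"
    "\<And>t. t \<in> {0..2 * pi} \<Longrightarrow> norm (norm (c0' t) + (1 + pi) * norm (c1' t - c0' t) + norm (c1 t - c0 t)) \<le> M"
    using continuous_on_compact_bound[OF compact_Icc] by blast
  have "energy_N (zigzag_homotopy c0 c1 N) \<le> ennreal ((2 * pi * (392 * M ^ 3)) / N)" if "0 < N" for N
  proof -
    have "energy_N (zigzag_homotopy c0 c1 N) \<le> ennreal (2 * pi * (392 * M ^ 3 / N))"
    proof (rule energy_N_le[OF countable_sin_mult_zeros])
      fix \<theta> v :: real assume "\<theta> \<in> {0..2 * pi}" "v \<in> {0..1}" "\<theta> \<notin> {\<theta>. sin (N * \<theta>) = 0}"
      then show "energy_density (zigzag_homotopy c0 c1 N) \<theta> v \<le> 392 * M ^ 3 / N"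
        using M(2)[of \<theta>] \<open>0 < N\<close> by (intro energy_density_zigzag_homotopy_le[OF d0 d1]) auto
    qed (use \<open>0 < N\<close> M in auto)
    then show ?thesis by simp
  qed
  then show ?thesis by (rule that)
qed

theorem mainTheorem13:
  fixes c0 c1 :: "real \<Rightarrow> real ^ 'n"
  assumes "CARD('n) \<ge> 2"
    and "smooth_regular_closed_curve c0"
    and "smooth_regular_closed_curve c1"
  shows "\<forall>\<epsilon>>0. \<exists>C\<in>homotopy_class c0 c1. energy_N C < ennreal \<epsilon>"
proof (intro allI impI)
  fix \<epsilon> :: real assume "0 < \<epsilon>"
  obtain c0' where p0: "periodic_curve c0" and d0: "\<And>t. (c0 has_vector_derivative c0' t) (at t)"
    and k0: "continuous_on UNIV c0'" using smooth_regular_closed_curve_C1[OF assms(2)] by blast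
  obtain c1' where p1: "periodic_curve c1" and d1: "\<And>t. (c1 has_vector_derivative c1' t) (at t)"
    and k1: "continuous_on UNIV c1'" using smooth_regular_closed_curve_C1[OF assms(3)] by blast
  obtain K where K: "\<And>N. 0 < N \<Longrightarrow> energy_N (zigzag_homotopy c0 c1 N) \<le> ennreal (K / N)"
    using zigzag_homotopy_energy_le[OF d0 d1 k0 k1] by blast
  obtain n :: nat where n: "max 1 (K / \<epsilon>) < n" using reals_Archimedean2 by blast
  then have "0 < real n" "K / real n < \<epsilon>" using \<open>0 < \<epsilon>\<close> by (auto simp: field_simps)
  then have "energy_N (zigzag_homotopy c0 c1 (real n)) < ennreal \<epsilon>"
    using K[of "real n"] \<open>0 < \<epsilon>\<close> by (meson ennreal_lessI order_le_less_trans)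
  then show "\<exists>C\<in>homotopy_class c0 c1. energy_N C < ennreal \<epsilon>"
    using zigzag_homotopy_in_homotopy_class[OF p0 p1 d0 d1 k0 k1] by blast
qed

end
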